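(* For real $s>1$ let $u_s(t):=t\big(\frac{s+t}{s-1}\big)^{s-1}$. For each $s>1$ the equation $u_s(t)=1$ has a unique solution $t=c(s)$ with $t\ge-1$; it is a simple solution and $c(s)\in(0,1)$. The function $c$ is $C^\infty$ on $(1,\infty)$, strictly decreasing, and $c(s)\to c_0$ as $s\to\infty$, where $c_0\approx0.278465$ is the unique real number with $c_0e^{c_0+1}=1$, $0<c_0<1$. In particular, for every even integer $s\ge2$, the negative real root of $\psi_s(z):=z^{s-1}(z+s)-(s-1)^{s-1}$ is $z=-s-c(s)$. *)

theory Defs
  imports "HOL-Analysis.Analysis"
begin

definition u :: "real \<Rightarrow> real \<Rightarrow> real" where
  "u s t = t * ((s + t) / (s - 1)) powr (s - 1)"

text \<open>c(s): the solution t \<ge> -1 of u_s(t) = 1 (uniqueness is part of the theorem).\<close>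
definition c :: "real \<Rightarrow> real" where
  "c s = (THE t. t \<ge> -1 \<and> u s t = 1)"

definition c0 :: real where
  "c0 = (THE x. 0 < x \<and> x < 1 \<and> x * exp (x + 1) = 1)"

definition smooth_on :: "real set \<Rightarrow> (real \<Rightarrow> real) \<Rightarrow> bool" where
  "smooth_on S f \<longleftrightarrow> (\<exists>D :: nat \<Rightarrow> real \<Rightarrow> real.
      (\<forall>x\<in>S. D 0 x = f x) \<and>
      (\<forall>n. \<forall>x\<in>S. (D n has_real_derivative D (Suc n) x) (at x)))"

definition psi :: "nat \<Rightarrow> real \<Rightarrow> real" where
  "psi s z = z ^ (s - 1) * (z + real s) - (real s - 1) ^ (s - 1)"

end

(*
  Since u_s is nonpositive on [-1, 0], strictly increasing on (0, oo) and u_s(0) = 0 < 1 < u_s(1),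
  the equation u_s(t) = 1 has exactly one solution c(s) >= -1, and it lies in (0, 1).

  For t > 0 we have u_s(t) = exp (ln_u s t), and both partial derivatives ln_u_ds, ln_u_dt of
  ln_u are positive there. The implicit function theorem gives
  c' = - ln_u_ds s (c s) / ln_u_dt s (c s) < 0. This slope is an elementary expression in s and
  c(s), and differentiating an elementary expression along the curve (s, c(s)) produces again an
  elementary expression, so c has derivatives of all orders.

  With a = 1 + c(s) and m = s - 1 the equation ln_u s (c s) = 0 reads
  ln c(s) + c(s) + 1 = a - m ln (1 + a / m), which lies in [0, a^2 / (m + a)] and hence in
  [0, 4 / m]. As t |-> ln t + t + 1 is increasing and vanishes at c0, this squeezes c(s) into
  [c0, c0 + 4 / (s - 1)].

  For even s the substitution z = -s - t turns psi_s(z) = 0 into u_s(t) = 1, and psi_s has no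
  zero in [-s, 0).
*)
theory Submission
  imports Defs "HOL-Real_Asymp.Real_Asymp"
begin

definition ln_u :: "real \<Rightarrow> real \<Rightarrow> real" where
  "ln_u s t = ln t + (s - 1) * (ln (s + t) - ln (s - 1))"

definition ln_u_ds :: "real \<Rightarrow> real \<Rightarrow> real" where
  "ln_u_ds s t = ln (s + t) - ln (s - 1) + (s - 1) / (s + t) - 1"

definition ln_u_dt :: "real \<Rightarrow> real \<Rightarrow> real" where
  "ln_u_dt s t = 1 / t + (s - 1) / (s + t)"

lemma u_eq_exp_ln_u:
  assumes "s > 1" "t > 0"
  shows "u s t = exp (ln_u s t)"
proof -
  have "ln (u s t) = ln_u s t"
    using assms by (simp add: u_def ln_u_def ln_mult ln_powr ln_div)
  moreover have "u s t > 0" using assms by (simp add: u_def)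
  ultimately show ?thesis by (metis exp_ln)
qed

lemma u_nonpos:
  assumes "s > 1" "t \<ge> -1" "t \<le> 0"
  shows "u s t \<le> 0"
  using assms unfolding u_def by (simp add: mult_nonpos_nonneg)

lemma ln_u_strict_mono:
  assumes "s > 1" "0 < t" "t < t'"
  shows "ln_u s t < ln_u s t'"
proof -
  have "ln t < ln t'" "ln (s + t) < ln (s + t')" using assms by simp_all
  then show ?thesis unfolding ln_u_def using assms by (simp add: add_strict_mono)
qed

lemma u_strict_mono:
  assumes "s > 1" "0 < t" "t < t'"
  shows "u s t < u s t'"
  using ln_u_strict_mono[OF assms] assms by (simp add: u_eq_exp_ln_u)

lemma continuous_on_u:
  assumes "s > 1"
  shows "continuous_on {0..} (u s)"
  unfolding u_def using assms by (intro continuous_intros) auto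

lemma has_real_derivative_u:
  assumes "s > 1" "t > - s"
  shows "(u s has_real_derivative
           ((s + t) / (s - 1)) powr (s - 1) + t * ((s + t) / (s - 1)) powr (s - 2)) (at t)"
proof -
  have pos: "0 < (s + t) / (s - 1)" using assms by simp
  have "((\<lambda>x. (s + x) / (s - 1)) has_real_derivative 1 / (s - 1)) (at t)"
    using assms by (auto intro!: derivative_eq_intros)
  from DERIV_chain2[OF has_real_derivative_powr[OF pos, of "s - 1"] this]
  have "((\<lambda>x. ((s + x) / (s - 1)) powr (s - 1)) has_real_derivative
          ((s + t) / (s - 1)) powr (s - 2)) (at t)"
    using assms by simp
  from DERIV_mult'[OF DERIV_ident this] show ?thesis
    unfolding u_def [abs_def] by (simp add: algebra_simps)
qed

lemma u_1_gt_1: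
  assumes "s > 1"
  shows "u s 1 > 1"
proof -
  have "1 < (s + 1) / (s - 1)" using assms by simp
  then show ?thesis unfolding u_def using assms by simp
qed

lemma ex1_u_eq_1:
  assumes "s > 1"
  shows "\<exists>!t. t \<ge> -1 \<and> u s t = 1"
proof -
  have "continuous_on {0..1} (u s)"
    using continuous_on_subset[OF continuous_on_u[OF assms]] by auto
  then obtain t where t: "0 \<le> t" "t \<le> 1" "u s t = 1"
    using IVT'[of "u s" 0 1 1] u_1_gt_1[OF assms] by (auto simp: u_def)
  have pos: "y > 0" if "y \<ge> -1" "u s y = 1" for y
    using u_nonpos[OF assms, of y] that by linarith
  show ?thesis
  proof (rule ex1I[of _ t])
    fix y assume y: "y \<ge> -1 \<and> u s y = 1"
    show "y = t"
      using u_strict_mono[OF assms pos[of y], of t] u_strict_mono[OF assms pos[of t], of y] t y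
      by (cases y t rule: linorder_cases) auto
  qed (use t in auto)
qed

lemma c_unique:
  assumes "s > 1" "t \<ge> -1" "u s t = 1"
  shows "c s = t"
  unfolding c_def by (rule the1_equality[OF ex1_u_eq_1[OF assms(1)]]) (use assms in simp)

lemma
  assumes "s > 1"
  shows u_c: "u s (c s) = 1"
    and c_pos: "0 < c s"
    and c_less_1: "c s < 1"
proof -
  have c: "c s \<ge> -1 \<and> u s (c s) = 1"
    unfolding c_def by (rule theI'[OF ex1_u_eq_1[OF assms]])
  then show "u s (c s) = 1" by simp
  show pos: "0 < c s"
    using c u_nonpos[OF assms, of "c s"] by linarith
  show "c s < 1"
  proof (rule ccontr)
    assume "\<not> c s < 1"
    then have "u s 1 \<le> u s (c s)"
      using u_strict_mono[OF assms zero_less_one, of "c s"] by (cases "c s = 1") auto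
    then show False using c u_1_gt_1[OF assms] by simp
  qed
qed

lemma ln_u_c:
  assumes "s > 1"
  shows "ln_u s (c s) = 0"
  using u_eq_exp_ln_u[OF assms c_pos[OF assms]] u_c[OF assms] by simp

lemma has_derivative_ln_u:
  assumes "s > 1" "t > 0"
  shows "((\<lambda>p. ln_u (fst p) (snd p)) has_derivative
           (\<lambda>h. ln_u_ds s t * fst h + ln_u_dt s t * snd h)) (at (s, t))"
proof -
  have "m * ((a + b) * inverse q - a * inverse m) = m / q * a + m / q * b - a"
    if "m \<noteq> 0" "q \<noteq> 0" for a b m q :: real
    using that by (simp add: field_simps)
  from this[of "s - 1" "s + t"] assms show ?thesis
    unfolding ln_u_def ln_u_ds_def ln_u_dt_def
    by (auto intro!: derivative_eq_intros simp: fun_eq_iff algebra_simps divide_inverse)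
qed

lemma ln_u_ds_pos:
  assumes "s > 1" "t > 0"
  shows "ln_u_ds s t > 0"
proof -
  define q where "q = (s + t) / (s - 1)"
  have "q > 1" using assms by (simp add: q_def)
  then have "ln (1 / q) < 1 / q - 1"
    using ln_le_minus_one[of "1 / q"] ln_eq_minus_one[of "1 / q"] by fastforce
  moreover have "ln_u_ds s t = ln q + 1 / q - 1"
    using assms by (simp add: ln_u_ds_def q_def ln_div)
  ultimately show ?thesis using \<open>q > 1\<close> by (simp add: ln_div)
qed

lemma ln_u_dt_pos:
  assumes "s > 1" "t > 0"
  shows "ln_u_dt s t > 0"
  using assms unfolding ln_u_dt_def by (auto intro!: add_pos_pos)

lemma implicit_function_has_real_derivative:
  fixes F :: "real \<Rightarrow> real \<Rightarrow> real" and f :: "real \<Rightarrow> real"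
  assumes "open S" and "open T" and "x \<in> T"
    and on_graph: "\<And>y. y \<in> T \<Longrightarrow> (y, f y) \<in> S \<and> F y (f y) = 0"
    and cont: "continuous_on S (\<lambda>p. F (fst p) (snd p))"
    and inj: "\<And>y t t'. (y, t) \<in> S \<Longrightarrow> (y, t') \<in> S \<Longrightarrow> F y t = F y t' \<Longrightarrow> t = t'"
    and deriv: "((\<lambda>p. F (fst p) (snd p)) has_derivative (\<lambda>h. A * fst h + B * snd h)) (at (x, f x))"
    and "B \<noteq> 0"
  shows "(f has_real_derivative - A / B) (at x)"
proof -
  define \<Phi> where "\<Phi> p = (fst p, F (fst p) (snd p))" for p :: "real \<times> real"
  define \<Phi>' where "\<Phi>' h = (fst h, A * fst h + B * snd h)" for h :: "real \<times> real"
  define g where "g q = (fst q, THE t. (fst q, t) \<in> S \<and> F (fst q) t = snd q)" for q :: "real \<times> real"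
  define g' where "g' k = (fst k, (snd k - A * fst k) / B)" for k :: "real \<times> real"
  have g_\<Phi>: "g (\<Phi> p) = p" if "p \<in> S" for p
    using that inj unfolding g_def \<Phi>_def by (cases p) (auto intro!: the_equality)
  have graph_in_S: "(x, f x) \<in> S" using on_graph \<open>x \<in> T\<close> by blast
  have cont_\<Phi>: "continuous_on S \<Phi>"
    unfolding \<Phi>_def by (intro continuous_on_Pair continuous_on_fst continuous_on_id cont)
  have deriv_\<Phi>: "(\<Phi> has_derivative \<Phi>') (at (x, f x))"
    unfolding \<Phi>_def \<Phi>'_def by (intro has_derivative_Pair has_derivative_fst has_derivative_ident deriv)
  have "\<Phi>' \<circ> g' = id"
    using \<open>B \<noteq> 0\<close> by (auto simp: \<Phi>'_def g'_def fun_eq_iff)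
  from has_derivative_inverse_strong[OF \<open>open S\<close> graph_in_S cont_\<Phi> g_\<Phi> deriv_\<Phi> this]
  have "(g has_derivative g') (at (x, 0))"
    using on_graph[OF \<open>x \<in> T\<close>] by (simp add: \<Phi>_def)
  moreover have "((\<lambda>y. (y, 0)) has_derivative (\<lambda>h. (h, 0))) (at x)"
    by (rule has_derivative_Pair[OF has_derivative_ident has_derivative_const])
  ultimately have "((\<lambda>y. g (y, 0)) has_derivative (\<lambda>h. g' (h, 0))) (at x)"
    using has_derivative_compose by blast
  then have deriv_g: "((\<lambda>y. snd (g (y, 0))) has_real_derivative - A / B) (at x)"
    unfolding has_field_derivative_def
    by (rule has_derivative_eq_rhs[OF has_derivative_snd]) (auto simp: g'_def)
  have "snd (g (y, 0)) = f y" if "y \<in> T" for y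
    using g_\<Phi>[of "(y, f y)"] on_graph[OF that] by (simp add: \<Phi>_def)
  with has_field_derivative_transform_within_open[OF deriv_g \<open>open T\<close> \<open>x \<in> T\<close>]
  show ?thesis by blast
qed

lemma has_real_derivative_c:
  assumes "s > 1"
  shows "(c has_real_derivative - ln_u_ds s (c s) / ln_u_dt s (c s)) (at s)"
proof (rule implicit_function_has_real_derivative[where S = "{1<..} \<times> {0<..}" and T = "{1<..}"])
  have "isCont (\<lambda>p. ln_u (fst p) (snd p)) p" if "p \<in> {1<..} \<times> {0<..}" for p
    using that has_derivative_continuous[OF has_derivative_ln_u, of "fst p" "snd p"] by auto
  then show "continuous_on ({1<..} \<times> {0<..}) (\<lambda>p. ln_u (fst p) (snd p))"
    by (simp add: continuous_at_imp_continuous_on)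
  show "t = t'" if "(y, t) \<in> {1<..} \<times> {0<..}" "(y, t') \<in> {1<..} \<times> {0<..}" "ln_u y t = ln_u y t'"
    for y t t'
    using that ln_u_strict_mono[of y t t'] ln_u_strict_mono[of y t' t]
    by (cases t t' rule: linorder_cases) auto
  show "ln_u_dt s (c s) \<noteq> 0"
    using ln_u_dt_pos[OF assms c_pos[OF assms]] by simp
qed (use assms c_pos ln_u_c has_derivative_ln_u in \<open>auto simp: open_Times\<close>)

datatype expr = Const real | Var_s | Var_t | Add expr expr | Mult expr expr | Inv expr | Log expr

fun eval_expr :: "expr \<Rightarrow> real \<Rightarrow> real \<Rightarrow> real" where
  "eval_expr (Const a) s t = a"
| "eval_expr Var_s s t = s"
| "eval_expr Var_t s t = t"
| "eval_expr (Add e e') s t = eval_expr e s t + eval_expr e' s t"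
| "eval_expr (Mult e e') s t = eval_expr e s t * eval_expr e' s t"
| "eval_expr (Inv e) s t = inverse (eval_expr e s t)"
| "eval_expr (Log e) s t = ln (eval_expr e s t)"

fun defined_at :: "expr \<Rightarrow> real \<Rightarrow> real \<Rightarrow> bool" where
  "defined_at (Const a) s t = True"
| "defined_at Var_s s t = True"
| "defined_at Var_t s t = True"
| "defined_at (Add e e') s t = (defined_at e s t \<and> defined_at e' s t)"
| "defined_at (Mult e e') s t = (defined_at e s t \<and> defined_at e' s t)"
| "defined_at (Inv e) s t = (defined_at e s t \<and> eval_expr e s t \<noteq> 0)"
| "defined_at (Log e) s t = (defined_at e s t \<and> eval_expr e s t > 0)"

fun total_deriv :: "expr \<Rightarrow> expr \<Rightarrow> expr" where
  "total_deriv g (Const a) = Const 0"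
| "total_deriv g Var_s = Const 1"
| "total_deriv g Var_t = g"
| "total_deriv g (Add e e') = Add (total_deriv g e) (total_deriv g e')"
| "total_deriv g (Mult e e') = Add (Mult (total_deriv g e) e') (Mult e (total_deriv g e'))"
| "total_deriv g (Inv e) = Mult (Const (-1)) (Mult (total_deriv g e) (Mult (Inv e) (Inv e)))"
| "total_deriv g (Log e) = Mult (total_deriv g e) (Inv e)"

lemma defined_at_total_deriv:
  "defined_at g s t \<Longrightarrow> defined_at e s t \<Longrightarrow> defined_at (total_deriv g e) s t"
  by (induction e) auto

lemma has_real_derivative_total_deriv:
  assumes f: "(f has_real_derivative eval_expr g x (f x)) (at x)"
    and "defined_at e x (f x)"
  shows "((\<lambda>y. eval_expr e y (f y)) has_real_derivative eval_expr (total_deriv g e) x (f x)) (at x)"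
  using assms(2)
proof (induction e)
  case (Inv e)
  then show ?case by (auto intro!: derivative_eq_intros simp: power2_eq_square)
next
  case (Log e)
  then show ?case by (auto intro!: derivative_eq_intros simp: divide_inverse)
qed (use f in \<open>auto intro!: derivative_eq_intros\<close>)

lemma smooth_on_ode_solution:
  assumes deriv: "\<And>x. x \<in> S \<Longrightarrow> (f has_real_derivative eval_expr g x (f x)) (at x)"
    and defined: "\<And>x. x \<in> S \<Longrightarrow> defined_at g x (f x)"
  shows "smooth_on S f"
  unfolding smooth_on_def
proof (intro exI conjI ballI allI)
  let ?D = "\<lambda>n x. eval_expr ((total_deriv g ^^ n) Var_t) x (f x)"
  fix x assume "x \<in> S"
  show "?D 0 x = f x" by simp
  fix n
  have "defined_at ((total_deriv g ^^ n) Var_t) x (f x)"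
    using defined[OF \<open>x \<in> S\<close>] by (induction n) (auto intro: defined_at_total_deriv)
  from has_real_derivative_total_deriv[OF deriv[OF \<open>x \<in> S\<close>] this]
  show "(?D n has_real_derivative ?D (Suc n) x) (at x)" by simp
qed

definition c_deriv_expr :: expr where
  "c_deriv_expr =
     Mult (Const (-1))
       (Mult (Add (Add (Log (Add Var_s Var_t)) (Mult (Const (-1)) (Log (Add Var_s (Const (-1))))))
                  (Add (Mult (Add Var_s (Const (-1))) (Inv (Add Var_s Var_t))) (Const (-1))))
             (Inv (Add (Inv Var_t) (Mult (Add Var_s (Const (-1))) (Inv (Add Var_s Var_t))))))"

lemma eval_c_deriv_expr: "eval_expr c_deriv_expr s t = - ln_u_ds s t / ln_u_dt s t"
  by (simp add: c_deriv_expr_def ln_u_ds_def ln_u_dt_def divide_inverse algebra_simps)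

lemma defined_at_c_deriv_expr:
  assumes "s > 1" "t > 0"
  shows "defined_at c_deriv_expr s t"
  using assms ln_u_dt_pos[OF assms]
  by (simp add: c_deriv_expr_def ln_u_dt_def divide_inverse)

lemma smooth_on_c: "smooth_on {1<..} c"
proof (rule smooth_on_ode_solution)
  fix x :: real assume "x \<in> {1<..}"
  then show "(c has_real_derivative eval_expr c_deriv_expr x (c x)) (at x)"
    and "defined_at c_deriv_expr x (c x)"
    using has_real_derivative_c[of x] defined_at_c_deriv_expr[OF _ c_pos]
    by (simp_all add: eval_c_deriv_expr)
qed

lemma c_strict_antimono:
  assumes "1 < a" "a < b"
  shows "c b < c a"
proof (rule DERIV_neg_imp_decreasing[OF assms(2)])
  fix x assume "a \<le> x" "x \<le> b"
  with assms have "x > 1" by simp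
  then have "ln_u_ds x (c x) / ln_u_dt x (c x) > 0"
    using ln_u_ds_pos ln_u_dt_pos c_pos by simp
  with has_real_derivative_c[OF \<open>x > 1\<close>]
  show "\<exists>y. (c has_real_derivative y) (at x) \<and> y < 0" by (intro exI) auto
qed

lemma ex1_c0: "\<exists>!x::real. 0 < x \<and> x < 1 \<and> x * exp (x + 1) = 1"
proof -
  have mono: "x * exp (x + 1) < y * exp (y + 1)" if "0 < x" "x < y" for x y :: real
    using that by (intro mult_strict_mono) auto
  have "continuous_on {0..1} (\<lambda>x::real. x * exp (x + 1))"
    by (intro continuous_intros)
  moreover have "1 < exp (2::real)" by simp
  ultimately obtain x :: real where x: "0 \<le> x" "x \<le> 1" "x * exp (x + 1) = 1"
    using IVT'[of "\<lambda>x::real. x * exp (x + 1)" 0 1 1] by auto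
  then have "0 < x" "x < 1"
    using \<open>1 < exp 2\<close> by (auto simp: order.order_iff_strict)
  show ?thesis
  proof (rule ex1I[of _ x])
    fix y :: real assume y: "0 < y \<and> y < 1 \<and> y * exp (y + 1) = 1"
    show "y = x"
      using mono[of y x] mono[of x y] x y \<open>0 < x\<close> by (cases y x rule: linorder_cases) auto
  qed (use x \<open>0 < x\<close> \<open>x < 1\<close> in auto)
qed

lemma
  shows c0_pos: "0 < c0"
    and c0_less_1: "c0 < 1"
    and ln_c0: "ln c0 + c0 + 1 = 0"
proof -
  have c0: "0 < c0 \<and> c0 < 1 \<and> c0 * exp (c0 + 1) = 1"
    unfolding c0_def by (rule theI'[OF ex1_c0])
  then show "0 < c0" "c0 < 1" by auto
  have "ln c0 + (c0 + 1) = ln (c0 * exp (c0 + 1))"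
    using c0 by (subst ln_mult) auto
  also have "\<dots> = 0"
    using c0 by simp
  finally show "ln c0 + c0 + 1 = 0" by simp
qed

lemma
  fixes a m :: real
  assumes "a > 0" "m > 0"
  shows ln_one_plus_div_lower: "0 \<le> a - m * ln (1 + a / m)"
    and ln_one_plus_div_upper: "a - m * ln (1 + a / m) \<le> a\<^sup>2 / (m + a)"
proof -
  have "m * ln (1 + a / m) \<le> m * (a / m)"
    using assms ln_add_one_self_le_self[of "a / m"] by (intro mult_left_mono) auto
  then show "0 \<le> a - m * ln (1 + a / m)" using assms by simp
  have "m * ((a / m) / (1 + a / m)) \<le> m * ln (1 + a / m)"
    using assms ln_add1_ge[of "a / m"] by (intro mult_left_mono) (auto simp: add.commute)
  moreover have "m * ((a / m) / (1 + a / m)) = a - a\<^sup>2 / (m + a)"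
    using assms by (simp add: field_simps power2_eq_square)
  ultimately show "a - m * ln (1 + a / m) \<le> a\<^sup>2 / (m + a)" by simp
qed

lemma ln_c_plus_c_plus_1:
  assumes "s > 1"
  shows "ln (c s) + c s + 1 = (1 + c s) - (s - 1) * ln (1 + (1 + c s) / (s - 1))"
proof -
  have "1 + (1 + c s) / (s - 1) = (s + c s) / (s - 1)"
    using assms by (simp add: field_simps)
  then have "ln (1 + (1 + c s) / (s - 1)) = ln (s + c s) - ln (s - 1)"
    using assms c_pos[OF assms] by (simp add: ln_div)
  with ln_u_c[OF assms] show ?thesis by (simp add: ln_u_def)
qed

lemma c0_le_c:
  assumes "s > 1"
  shows "c0 \<le> c s"
proof (rule ccontr)
  assume "\<not> c0 \<le> c s"
  then have "ln (c s) < ln c0"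
    using c_pos[OF assms] by simp
  with \<open>\<not> c0 \<le> c s\<close> have "ln (c s) + c s + 1 < ln c0 + c0 + 1"
    by simp
  moreover have "0 \<le> ln (c s) + c s + 1"
    using ln_one_plus_div_lower[of "1 + c s" "s - 1"] c_pos[OF assms] assms
    by (simp add: ln_c_plus_c_plus_1[OF assms])
  ultimately show False using ln_c0 by simp
qed

lemma c_le_c0_plus:
  assumes "s > 1"
  shows "c s \<le> c0 + 4 / (s - 1)"
proof -
  have "ln c0 \<le> ln (c s)"
    using c0_le_c[OF assms] c0_pos by simp
  then have "c s - c0 \<le> ln (c s) + c s + 1"
    using ln_c0 by simp
  also have "\<dots> \<le> (1 + c s)\<^sup>2 / (s - 1 + (1 + c s))"
    using ln_one_plus_div_upper[of "1 + c s" "s - 1"] c_pos[OF assms] assms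
    by (simp add: ln_c_plus_c_plus_1[OF assms])
  also have "\<dots> \<le> 2\<^sup>2 / (s - 1)"
    using c_pos[OF assms] c_less_1[OF assms] assms
    by (intro frac_le power_mono) auto
  finally show ?thesis by simp
qed

lemma c_tendsto_c0: "(c \<longlongrightarrow> c0) at_top"
proof (rule tendsto_sandwich[of "\<lambda>_. c0" c _ "\<lambda>s. c0 + 4 / (s - 1)"])
  show "\<forall>\<^sub>F s in at_top. c0 \<le> c s"
    using eventually_gt_at_top[of 1] by eventually_elim (rule c0_le_c)
  show "\<forall>\<^sub>F s in at_top. c s \<le> c0 + 4 / (s - 1)"
    using eventually_gt_at_top[of 1] by eventually_elim (rule c_le_c0_plus)
  show "((\<lambda>s. c0 + 4 / (s - 1)) \<longlongrightarrow> c0) at_top"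
    by real_asymp
qed simp

lemma u_of_nat:
  assumes "n \<ge> 2" "t > - real n"
  shows "u (real n) t = t * (real n + t) ^ (n - 1) / (real n - 1) ^ (n - 1)"
proof -
  have "((real n + t) / (real n - 1)) powr (real n - 1) = ((real n + t) / (real n - 1)) ^ (n - 1)"
    using assms by (subst powr_realpow[symmetric]) (auto simp: of_nat_diff)
  then show ?thesis by (simp add: u_def power_divide)
qed

lemma psi_eq_0_iff_u_eq_1:
  assumes "even n" "n \<ge> 2" "t > - real n"
  shows "psi n (- real n - t) = 0 \<longleftrightarrow> u (real n) t = 1"
proof -
  define P where "P = t * (real n + t) ^ (n - 1)"
  define K where "K = (real n - 1) ^ (n - 1)"
  have "(- real n - t) ^ (n - 1) = - ((real n + t) ^ (n - 1))"
    using assms power_minus_odd[of "n - 1" "real n + t"] by simp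
  then have "psi n (- real n - t) = P - K"
    unfolding psi_def P_def K_def by (simp add: algebra_simps)
  moreover have "u (real n) t = P / K"
    using u_of_nat[OF assms(2,3)] by (simp add: P_def K_def)
  moreover have "K > 0"
    using assms by (simp add: K_def)
  ultimately show ?thesis by auto
qed

lemma psi_neg_root_less:
  assumes "even n" "n \<ge> 2" "z < 0" "psi n z = 0"
  shows "z < - real n"
proof (rule ccontr)
  assume "\<not> z < - real n"
  have "odd (n - 1)" using assms by simp
  with \<open>z < 0\<close> have "z ^ (n - 1) < 0" by simp
  moreover have "z + real n \<ge> 0" using \<open>\<not> z < - real n\<close> by simp
  ultimately have "z ^ (n - 1) * (z + real n) \<le> 0"
    by (metis less_imp_le mult_nonpos_nonneg)
  moreover have "(real n - 1) ^ (n - 1) > 0" using assms by simp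
  ultimately have "psi n z < 0" by (simp add: psi_def)
  with \<open>psi n z = 0\<close> show False by simp
qed

lemma neg_roots_psi:
  assumes "even n" "n \<ge> 2"
  shows "{z::real. z < 0 \<and> psi n z = 0} = {- real n - c (real n)}"
proof -
  have n: "real n > 1" using assms by simp
  have "z = - real n - c (real n)" if "z < 0" "psi n z = 0" for z
  proof -
    have "u (real n) (- real n - z) = 1"
      using psi_eq_0_iff_u_eq_1[OF assms, of "- real n - z"] that by simp
    moreover have "- 1 \<le> - real n - z"
      using psi_neg_root_less[OF assms that] by simp
    ultimately have "c (real n) = - real n - z"
      by (intro c_unique[OF n])
    then show ?thesis by simp
  qed
  moreover have "psi n (- real n - c (real n)) = 0"
    using psi_eq_0_iff_u_eq_1[OF assms] c_pos[OF n] u_c[OF n] by simp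
  moreover have "- real n - c (real n) < 0"
    using c_pos[OF n] by simp
  ultimately show ?thesis by blast
qed

theorem mainTheorem14:
  shows "(\<forall>s::real. s > 1 \<longrightarrow>
            (\<exists>!t. t \<ge> -1 \<and> u s t = 1) \<and>
            (\<exists>D. (u s has_real_derivative D) (at (c s)) \<and> D \<noteq> 0) \<and>
            0 < c s \<and> c s < 1)
       \<and> smooth_on {1<..} c
       \<and> (\<forall>a b::real. 1 < a \<longrightarrow> a < b \<longrightarrow> c b < c a)
       \<and> (\<exists>!x::real. 0 < x \<and> x < 1 \<and> x * exp (x + 1) = 1)
       \<and> (c \<longlongrightarrow> c0) at_top
       \<and> (\<forall>s::nat. even s \<and> s \<ge> 2 \<longrightarrow>
            {z::real. z < 0 \<and> psi s z = 0} = {- real s - c (real s)})"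
proof (intro conjI allI impI)
  fix s :: real assume s: "s > 1"
  let ?b = "(s + c s) / (s - 1)"
  have "?b powr (s - 1) + c s * ?b powr (s - 2) > 0"
    using s c_pos[OF s] by (intro add_pos_pos mult_pos_pos) auto
  with has_real_derivative_u[OF s] c_pos[OF s] s
  show "\<exists>D. (u s has_real_derivative D) (at (c s)) \<and> D \<noteq> 0"
    by (intro exI[of _ "?b powr (s - 1) + c s * ?b powr (s - 2)"]) auto
qed (simp_all add: ex1_u_eq_1 c_pos c_less_1 smooth_on_c c_strict_antimono ex1_c0 c_tendsto_c0
    neg_roots_psi)

end
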